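(* Let $T$ be a tree. If $f(X)$ is a nonzero minor of $L(T,X)$ (the determinant of a square submatrix $L(T,X)[I,J]$ with $|I|=|J|\geq1$) whose leading coefficient is positive, then there exists a $2$-matching $\mathcal{M}$ of $T^\ell$ such that $f(X)=d(\mathcal{M},X)$.
   Context: A tree is a simple connected graph without cycles. $L(T,X)$ is the matrix indexed by $V(T)$ with diagonal entries $x_u$ and off-diagonal entry $-1$ for adjacent vertices and $0$ otherwise. Leading coefficients are taken with respect to the degree lexicographic monomial order. A $2$-matching of a graph (loops allowed) is a set $\mathcal{M}$ of edges such that every vertex is incident to at most two edges of $\mathcal{M}$ (a loop counts twice for incidence but as one edge). $T^\ell$ is $T$ with a loop added at each vertex. Components of $\mathcal{M}$ are single loops or paths of $T$; orient each path $w_1\cdots w_{m+1}$ (either direction), with heads $\{w_2,\dots,w_{m+1}\}$ and tails $\{w_1,\dots,w_m\}$, a loop $uu$ having head and tail $u$; $h(\mathcal{M})$, $t(\mathcal{M})$ are the unions of heads, resp. tails. $d(\mathcal{M},X)=\pm\det L(T,X)[h(\mathcal{M}),t(\mathcal{M})]$, the sign chosen so that the leading coefficient is positive. *)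

theory Defs
  imports "HOL-Library.Poly_Mapping" "Jordan_Normal_Form.Determinant"
begin

(* Integer multivariate polynomials in variables x_u (u :: 'a): monomials are
   exponent vectors 'a \<Rightarrow>\<^sub>0 nat, polynomials are finitely supported maps
   monomial \<Rightarrow> coefficient. *)
type_synonym 'a mpoly_int = "('a \<Rightarrow>\<^sub>0 nat) \<Rightarrow>\<^sub>0 int"

definition mdeg :: "('a \<Rightarrow>\<^sub>0 nat) \<Rightarrow> nat" where
  "mdeg m = (\<Sum>v\<in>Poly_Mapping.keys m. Poly_Mapping.lookup m v)"

(* lexicographic order, variable x_u bigger than x_v when u < v *)
definition lex_less :: "('a::linorder \<Rightarrow>\<^sub>0 nat) \<Rightarrow> ('a \<Rightarrow>\<^sub>0 nat) \<Rightarrow> bool" where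
  "lex_less m1 m2 \<longleftrightarrow> (\<exists>v. (\<forall>u<v. Poly_Mapping.lookup m1 u = Poly_Mapping.lookup m2 u) \<and> Poly_Mapping.lookup m1 v < Poly_Mapping.lookup m2 v)"

definition deglex_less :: "('a::linorder \<Rightarrow>\<^sub>0 nat) \<Rightarrow> ('a \<Rightarrow>\<^sub>0 nat) \<Rightarrow> bool" where
  "deglex_less m1 m2 \<longleftrightarrow> mdeg m1 < mdeg m2 \<or> (mdeg m1 = mdeg m2 \<and> lex_less m1 m2)"

definition lead_monom :: "'a::linorder mpoly_int \<Rightarrow> ('a \<Rightarrow>\<^sub>0 nat)" where
  "lead_monom p = (THE m. m \<in> Poly_Mapping.keys p \<and> (\<forall>m'\<in>Poly_Mapping.keys p. m' \<noteq> m \<longrightarrow> deglex_less m' m))"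

definition lead_coeff_dl :: "'a::linorder mpoly_int \<Rightarrow> int" where
  "lead_coeff_dl p = Poly_Mapping.lookup p (lead_monom p)"

definition mvar :: "'a \<Rightarrow> 'a mpoly_int" where
  "mvar u = Poly_Mapping.single (Poly_Mapping.single u 1) 1"

definition graph :: "'a set \<Rightarrow> 'a set set \<Rightarrow> bool" where
  "graph V E \<longleftrightarrow> finite V \<and> (\<forall>e\<in>E. e \<subseteq> V \<and> card e = 2)"

definition connected_graph :: "'a set \<Rightarrow> 'a set set \<Rightarrow> bool" where
  "connected_graph V E \<longleftrightarrow>
     (\<forall>u\<in>V. \<forall>v\<in>V. (u, v) \<in> {(x, y). {x, y} \<in> E}\<^sup>*)"

definition is_cycle :: "'a set set \<Rightarrow> 'a list \<Rightarrow> bool" where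
  "is_cycle E c \<longleftrightarrow> length c \<ge> 3 \<and> distinct c \<and>
     (\<forall>i. Suc i < length c \<longrightarrow> {c ! i, c ! Suc i} \<in> E) \<and> {last c, hd c} \<in> E"

definition tree :: "'a set \<Rightarrow> 'a set set \<Rightarrow> bool" where
  "tree V E \<longleftrightarrow> graph V E \<and> V \<noteq> {} \<and> connected_graph V E \<and> (\<nexists>c. is_cycle E c)"

definition Lentry :: "'a set set \<Rightarrow> 'a \<Rightarrow> 'a \<Rightarrow> 'a mpoly_int" where
  "Lentry E u v = (if u = v then mvar u else if {u, v} \<in> E then - 1 else 0)"

definition Lsub :: "'a set set \<Rightarrow> 'a list \<Rightarrow> 'a list \<Rightarrow> 'a mpoly_int mat" where
  "Lsub E rs cs = mat (length rs) (length cs) (\<lambda>(i, j). Lentry E (rs ! i) (cs ! j))"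

(* 2-matchings of T^l: edges of T or loops {u}; a loop counts twice for incidence *)
definition two_matching_loops :: "'a set \<Rightarrow> 'a set set \<Rightarrow> 'a set set \<Rightarrow> bool" where
  "two_matching_loops V E M \<longleftrightarrow>
     M \<subseteq> E \<union> {{u} | u. u \<in> V} \<and>
     (\<forall>u\<in>V. (if {u} \<in> M then 2 else 0) + card {e\<in>M. card e = 2 \<and> u \<in> e} \<le> (2::nat))"

(* an orientation of the path components of M: each non-loop edge gets exactly one
   direction, and every vertex has in-degree and out-degree at most 1, so every path
   w_1 ... w_{m+1} is oriented consistently in one of its two directions *)
definition orientation :: "'a set set \<Rightarrow> ('a \<times> 'a) set \<Rightarrow> bool" where
  "orientation M D \<longleftrightarrow>
     (\<forall>(u, v)\<in>D. u \<noteq> v \<and> {u, v} \<in> M) \<and>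
     (\<forall>u v. u \<noteq> v \<and> {u, v} \<in> M \<longrightarrow> ((u, v) \<in> D \<longleftrightarrow> (v, u) \<notin> D)) \<and>
     (\<forall>u v w. (u, v) \<in> D \<and> (u, w) \<in> D \<longrightarrow> v = w) \<and>
     (\<forall>u v w. (u, w) \<in> D \<and> (v, w) \<in> D \<longrightarrow> u = v)"

definition heads :: "'a set set \<Rightarrow> ('a \<times> 'a) set \<Rightarrow> 'a set" where
  "heads M D = {v. \<exists>u. (u, v) \<in> D} \<union> {u. {u} \<in> M}"

definition tails :: "'a set set \<Rightarrow> ('a \<times> 'a) set \<Rightarrow> 'a set" where
  "tails M D = {u. \<exists>v. (u, v) \<in> D} \<union> {u. {u} \<in> M}"

definition dM :: "'a::linorder set set \<Rightarrow> 'a set set \<Rightarrow> ('a \<times> 'a) set \<Rightarrow> 'a mpoly_int" where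
  "dM E M D = (let p = det (Lsub E (sorted_list_of_set (heads M D)) (sorted_list_of_set (tails M D)))
               in if lead_coeff_dl p > 0 then p else - p)"

end

theory Submission
  imports Defs
begin

text \<open>A nonzero minor has a nonvanishing term in its permutation expansion, i.e. a bijection
\<open>\<sigma>\<close> from the rows to the columns such that each \<open>\<sigma> v\<close> equals \<open>v\<close> or is adjacent to \<open>v\<close>.
A 2-cycle of \<open>\<sigma>\<close> may be replaced by two fixed points, since both of its vertices are rows
and columns. Then the fixed points of \<open>\<sigma>\<close> become loops and the remaining pairs \<open>v, \<sigma> v\<close>
become edges oriented \<open>\<sigma> v \<rightarrow> v\<close>: this is a 2-matching of \<open>T\<^sup>\<ell>\<close> whose heads are the rows
and whose tails are the columns, so \<open>d(M,X)\<close> is the minor up to sign, and the sign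
convention of \<open>d\<close> makes them equal.\<close>

definition entry_mat :: "('a \<Rightarrow> 'b \<Rightarrow> 'c) \<Rightarrow> 'a list \<Rightarrow> 'b list \<Rightarrow> 'c mat" where
  "entry_mat g rs cs = mat (length rs) (length cs) (\<lambda>(i, j). g (rs ! i) (cs ! j))"

lemma Lsub_eq_entry_mat: "Lsub E rs cs = entry_mat (Lentry E) rs cs"
  by (simp add: Lsub_def entry_mat_def)

lemma transpose_entry_mat: "transpose_mat (entry_mat g rs cs) = entry_mat (\<lambda>c r. g r c) cs rs"
  by (auto simp: entry_mat_def)

lemma det_entry_mat_permute_rows:
  fixes g :: "'a \<Rightarrow> 'b \<Rightarrow> 'c::comm_ring_1"
  assumes "distinct rs" "distinct rs'" "set rs' = set rs" "length cs = length rs"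
  shows "det (entry_mat g rs' cs) = det (entry_mat g rs cs) \<or>
         det (entry_mat g rs' cs) = - det (entry_mat g rs cs)"
proof -
  let ?n = "length rs" and ?A = "entry_mat g rs cs"
  have "mset rs' = mset rs"
    using assms(1-3) set_eq_iff_mset_eq_distinct by blast
  then obtain p where p: "p permutes {..<?n}" "permute_list p rs = rs'"
    by (rule mset_eq_permutation)
  have p_less: "p i < ?n" if "i < ?n" for i
    using permutes_in_image[OF p(1)] that by simp
  have "entry_mat g rs' cs = mat ?n ?n (\<lambda>(i, j). ?A $$ (p i, j))"
    using p assms(4) by (intro eq_matI) (auto simp: entry_mat_def permute_list_nth p_less)
  then have "det (entry_mat g rs' cs) = signof p * det ?A"
    using det_permute_rows[OF _ p(1)[unfolded lessThan_atLeast0], of ?A] assms(4) by (simp add: entry_mat_def)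
  then show ?thesis
    by (cases p rule: sign_cases) simp_all
qed

lemma det_entry_mat_permute:
  fixes g :: "'a \<Rightarrow> 'b \<Rightarrow> 'c::comm_ring_1"
  assumes "distinct rs" "distinct rs'" "set rs' = set rs"
    and "distinct cs" "distinct cs'" "set cs' = set cs" and "length cs = length rs"
  shows "det (entry_mat g rs' cs') = det (entry_mat g rs cs) \<or>
         det (entry_mat g rs' cs') = - det (entry_mat g rs cs)"
proof -
  have "length cs' = length rs"
    using assms by (metis distinct_card)
  then have rows: "det (entry_mat g rs' cs') = det (entry_mat g rs cs') \<or>
      det (entry_mat g rs' cs') = - det (entry_mat g rs cs')"
    using det_entry_mat_permute_rows assms(1-3) by blast
  have det_swap: "det (entry_mat g xs ys) = det (entry_mat (\<lambda>c r. g r c) ys xs)"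
    if "length ys = length xs" for xs ys
  proof -
    have "entry_mat g xs ys \<in> carrier_mat (length xs) (length xs)"
      using that by (simp add: entry_mat_def)
    from det_transpose[OF this] show ?thesis
      by (simp add: transpose_entry_mat)
  qed
  have "det (entry_mat (\<lambda>c r. g r c) cs' rs) = det (entry_mat (\<lambda>c r. g r c) cs rs) \<or>
      det (entry_mat (\<lambda>c r. g r c) cs' rs) = - det (entry_mat (\<lambda>c r. g r c) cs rs)"
    using det_entry_mat_permute_rows assms(4-7) by metis
  then have "det (entry_mat g rs cs') = det (entry_mat g rs cs) \<or>
      det (entry_mat g rs cs') = - det (entry_mat g rs cs)"
    using det_swap \<open>length cs' = length rs\<close> assms(7) by metis
  with rows show ?thesis
    by auto
qed

lemma det_entry_mat_nonzero_imp_bij: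
  fixes g :: "'a \<Rightarrow> 'b \<Rightarrow> 'c::comm_ring_1"
  assumes "distinct rs" "distinct cs" "length cs = length rs" "det (entry_mat g rs cs) \<noteq> 0"
  obtains \<tau> where "bij_betw \<tau> (set rs) (set cs)" "\<forall>v\<in>set rs. g v (\<tau> v) \<noteq> 0"
proof -
  let ?n = "length rs" and ?A = "entry_mat g rs cs"
  have A: "?A \<in> carrier_mat ?n ?n"
    using assms(3) by (simp add: entry_mat_def)
  obtain p where p: "p permutes {0..<?n}"
    and term_nonzero: "signof p * (\<Prod>i = 0..<?n. ?A $$ (i, p i)) \<noteq> 0"
    using assms(4) unfolding det_def'[OF A] by (rule sum.not_neutral_contains_not_neutral) simp
  have p_less: "p i < ?n" if "i < ?n" for i
    using permutes_in_image[OF p] that by simp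
  have nonzero: "g (rs ! i) (cs ! p i) \<noteq> 0" if "i < ?n" for i
  proof
    assume "g (rs ! i) (cs ! p i) = 0"
    then have "?A $$ (i, p i) = 0"
      using that p_less assms(3) by (simp add: entry_mat_def)
    then have "(\<Prod>i = 0..<?n. ?A $$ (i, p i)) = 0"
      using that by (intro prod_zero) auto
    with term_nonzero show False
      by simp
  qed
  have rs: "bij_betw ((!) rs) {0..<?n} (set rs)" and cs: "bij_betw ((!) cs) {0..<?n} (set cs)"
    using bij_betw_nth[OF assms(1), of "{0..<?n}" "set rs"] bij_betw_nth[OF assms(2), of "{0..<?n}" "set cs"]
      assms(3) by (simp_all add: lessThan_atLeast0)
  let ?index = "inv_into {0..<?n} ((!) rs)"
  define \<tau> where "\<tau> = (!) cs \<circ> (p \<circ> ?index)"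
  have "bij_betw \<tau> (set rs) (set cs)"
    unfolding \<tau>_def using bij_betw_inv_into[OF rs] permutes_imp_bij[OF p] cs
    by (intro bij_betw_trans)
  moreover have "g v (\<tau> v) \<noteq> 0" if "v \<in> set rs" for v
  proof -
    have "?index v < ?n" and "rs ! ?index v = v"
      using bij_betwE[OF bij_betw_inv_into[OF rs]] bij_betw_inv_into_right[OF rs] that by auto
    then show ?thesis
      using nonzero by (metis \<tau>_def comp_apply)
  qed
  ultimately show ?thesis
    using that by blast
qed

lemma Lentry_nonzero_imp_eq_or_edge: "Lentry E u v \<noteq> 0 \<Longrightarrow> v = u \<or> {u, v} \<in> E"
  by (auto simp: Lentry_def split: if_splits)

lemma bij_betw_break_2_cycles:
  assumes \<tau>: "bij_betw \<tau> R C" and adj: "\<forall>v\<in>R. \<tau> v = v \<or> P v (\<tau> v)"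
  obtains \<sigma> where "bij_betw \<sigma> R C" "\<forall>v\<in>R. \<sigma> v = v \<or> P v (\<sigma> v)"
    "\<forall>v\<in>R. \<sigma> v \<in> R \<longrightarrow> \<sigma> (\<sigma> v) = v \<longrightarrow> \<sigma> v = v"
proof -
  \<comment> \<open>\<open>S\<close> is the union of the 2-cycles of \<open>\<tau>\<close>; as \<open>\<tau>\<close> permutes \<open>S\<close>, fixing it pointwise keeps the image \<open>C\<close>.\<close>
  define S where "S = {v \<in> R. \<tau> v \<in> R \<and> \<tau> (\<tau> v) = v}"
  define \<sigma> where "\<sigma> v = (if v \<in> S then v else \<tau> v)" for v
  have inj: "inj_on \<tau> R"
    using \<tau> by (rule bij_betw_imp_inj_on)
  have "\<tau> ` S = S"
    by (auto simp: S_def image_iff) (metis)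
  have outside: "\<tau> v \<notin> S" if "v \<in> R - S" for v
    using that inj by (auto simp: S_def dest: inj_onD)
  have "bij_betw \<sigma> S S"
    by (simp add: \<sigma>_def bij_betw_def inj_on_def)
  moreover have "bij_betw \<sigma> (R - S) (\<tau> ` (R - S))"
    using bij_betw_subset[OF \<tau>, of "R - S"] by (rule bij_betw_cong[THEN iffD1, rotated]) (simp_all add: \<sigma>_def)
  moreover have "S \<inter> \<tau> ` (R - S) = {}"
    using outside by blast
  ultimately have "bij_betw \<sigma> (S \<union> (R - S)) (S \<union> \<tau> ` (R - S))"
    by (rule bij_betw_combine)
  moreover have "S \<union> (R - S) = R" and "S \<union> \<tau> ` (R - S) = C"
    using \<open>\<tau> ` S = S\<close> bij_betw_imp_surj_on[OF \<tau>] by (auto simp: S_def)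
  ultimately have "bij_betw \<sigma> R C"
    by simp
  moreover have "\<forall>v\<in>R. \<sigma> v = v \<or> P v (\<sigma> v)"
    using adj by (simp add: \<sigma>_def)
  moreover have "\<forall>v\<in>R. \<sigma> v \<in> R \<longrightarrow> \<sigma> (\<sigma> v) = v \<longrightarrow> \<sigma> v = v"
    using outside by (auto simp: \<sigma>_def S_def)
  ultimately show ?thesis
    using that by blast
qed

definition matching_of :: "('a \<Rightarrow> 'a) \<Rightarrow> 'a set \<Rightarrow> 'a set set" where
  "matching_of \<sigma> R = {{v} | v. v \<in> R \<and> \<sigma> v = v} \<union> {{\<sigma> v, v} | v. v \<in> R \<and> \<sigma> v \<noteq> v}"

definition arcs_of :: "('a \<Rightarrow> 'a) \<Rightarrow> 'a set \<Rightarrow> ('a \<times> 'a) set" where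
  "arcs_of \<sigma> R = {(\<sigma> v, v) | v. v \<in> R \<and> \<sigma> v \<noteq> v}"

lemma singleton_in_matching_of: "{u} \<in> matching_of \<sigma> R \<longleftrightarrow> u \<in> R \<and> \<sigma> u = u"
  by (auto simp: matching_of_def doubleton_eq_iff)

lemma doubleton_in_matching_of:
  "u \<noteq> v \<Longrightarrow> {u, v} \<in> matching_of \<sigma> R \<longleftrightarrow> (u, v) \<in> arcs_of \<sigma> R \<or> (v, u) \<in> arcs_of \<sigma> R"
  by (auto simp: matching_of_def arcs_of_def doubleton_eq_iff)

lemma heads_matching_of: "heads (matching_of \<sigma> R) (arcs_of \<sigma> R) = R"
  by (auto simp: heads_def arcs_of_def singleton_in_matching_of)

lemma tails_matching_of: "tails (matching_of \<sigma> R) (arcs_of \<sigma> R) = \<sigma> ` R"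
  by (auto simp: tails_def arcs_of_def singleton_in_matching_of intro: rev_image_eqI)

lemma orientation_arcs_of:
  assumes "inj_on \<sigma> R" and "\<forall>v\<in>R. \<sigma> v \<in> R \<longrightarrow> \<sigma> (\<sigma> v) = v \<longrightarrow> \<sigma> v = v"
  shows "orientation (matching_of \<sigma> R) (arcs_of \<sigma> R)"
  unfolding orientation_def
proof (intro conjI allI impI)
  show "\<forall>(u, v)\<in>arcs_of \<sigma> R. u \<noteq> v \<and> {u, v} \<in> matching_of \<sigma> R"
    unfolding arcs_of_def matching_of_def by blast
next
  fix u v
  assume "u \<noteq> v \<and> {u, v} \<in> matching_of \<sigma> R"
  then show "(u, v) \<in> arcs_of \<sigma> R \<longleftrightarrow> (v, u) \<notin> arcs_of \<sigma> R"
    using assms(2) by (auto simp: doubleton_in_matching_of) (auto simp: arcs_of_def)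
next
  fix u v w
  assume "(u, v) \<in> arcs_of \<sigma> R \<and> (u, w) \<in> arcs_of \<sigma> R"
  then show "v = w"
    using assms(1) by (auto simp: arcs_of_def dest: inj_onD)
next
  fix u v w
  assume "(u, w) \<in> arcs_of \<sigma> R \<and> (v, w) \<in> arcs_of \<sigma> R"
  then show "u = v"
    by (auto simp: arcs_of_def)
qed

lemma two_matching_loops_matching_of:
  assumes inj: "inj_on \<sigma> R" and "R \<subseteq> V" and adj: "\<forall>v\<in>R. \<sigma> v = v \<or> {v, \<sigma> v} \<in> E"
  shows "two_matching_loops V E (matching_of \<sigma> R)"
  unfolding two_matching_loops_def
proof (intro conjI ballI)
  have loops: "{{v} | v. v \<in> R \<and> \<sigma> v = v} \<subseteq> {{u} | u. u \<in> V}"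
    using \<open>R \<subseteq> V\<close> by blast
  have "{\<sigma> v, v} \<in> E" if "v \<in> R" "\<sigma> v \<noteq> v" for v
    using adj that by (metis insert_commute)
  then have edges: "{{\<sigma> v, v} | v. v \<in> R \<and> \<sigma> v \<noteq> v} \<subseteq> E"
    by blast
  show "matching_of \<sigma> R \<subseteq> E \<union> {{u} | u. u \<in> V}"
    unfolding matching_of_def by (rule Un_least[OF le_supI2[OF loops] le_supI1[OF edges]])
next
  fix u
  let ?W = "{w \<in> R. \<sigma> w \<noteq> w \<and> (w = u \<or> \<sigma> w = u)}"
  let ?S = "{e \<in> matching_of \<sigma> R. card e = 2 \<and> u \<in> e}"
  have S_sub: "?S \<subseteq> (\<lambda>w. {\<sigma> w, w}) ` ?W"
  proof
    fix e
    assume e: "e \<in> ?S"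
    then have "e \<notin> {{v} | v. v \<in> R \<and> \<sigma> v = v}"
      by auto
    with e obtain w where w: "w \<in> R" "\<sigma> w \<noteq> w" "e = {\<sigma> w, w}"
      unfolding matching_of_def by blast
    with e have "w \<in> ?W"
      by auto
    with w show "e \<in> (\<lambda>w. {\<sigma> w, w}) ` ?W"
      by blast
  qed
  have "{w \<in> R. \<sigma> w = u} \<subseteq> {the_inv_into R \<sigma> u}"
    by (auto simp: the_inv_into_f_f[OF inj])
  then have W_sub: "?W \<subseteq> {u, the_inv_into R \<sigma> u}"
    by blast
  show "(if {u} \<in> matching_of \<sigma> R then 2 else 0) + card ?S \<le> 2"
  proof (cases "{u} \<in> matching_of \<sigma> R")
    case True
    then have "u \<in> R" "\<sigma> u = u"
      by (simp_all add: singleton_in_matching_of)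
    then have "?W = {}"
      by (auto dest: inj_onD[OF inj])
    then have "?S = {}"
      using S_sub by (simp only: image_empty subset_empty)
    then have "card ?S = 0"
      by (simp only: card.empty)
    then show ?thesis
      using True by simp
  next
    case False
    have fin: "finite ?W"
      using W_sub by (rule finite_subset) simp
    have "card ?S \<le> card ((\<lambda>w. {\<sigma> w, w}) ` ?W)"
      by (intro card_mono finite_imageI fin S_sub)
    also have "\<dots> \<le> card ?W"
      by (rule card_image_le[OF fin])
    also have "\<dots> \<le> card {u, the_inv_into R \<sigma> u}"
      by (rule card_mono[OF _ W_sub]) simp
    also have "\<dots> \<le> 2"
      by (simp add: card_insert_if)
    finally show ?thesis
      using False by simp
  qed
qed

lemma lead_coeff_dl_uminus: "lead_coeff_dl (- p) = - lead_coeff_dl p"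
proof -
  have "Poly_Mapping.keys (- p) = Poly_Mapping.keys p"
    by (auto simp: in_keys_iff)
  then show ?thesis
    by (simp add: lead_coeff_dl_def lead_monom_def)
qed

lemma dM_eq_det:
  assumes "heads M D = set rs" "tails M D = set cs" "distinct rs" "distinct cs"
    and "length cs = length rs" and "lead_coeff_dl (det (Lsub E rs cs)) > 0"
  shows "dM E M D = det (Lsub E rs cs)"
proof -
  let ?p = "det (Lsub E (sorted_list_of_set (set rs)) (sorted_list_of_set (set cs)))"
  have "?p = det (Lsub E rs cs) \<or> ?p = - det (Lsub E rs cs)"
    unfolding Lsub_eq_entry_mat using assms(3-5) by (intro det_entry_mat_permute) simp_all
  then show ?thesis
    using assms(1,2,6) by (auto simp: dM_def Let_def lead_coeff_dl_uminus)
qed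

theorem lemma3p3:
  fixes V :: "'a::linorder set" and E :: "'a set set"
    and rs cs :: "'a list" and f :: "'a mpoly_int"
  assumes "tree V E"
    and "distinct rs" and "distinct cs" and "set rs \<subseteq> V" and "set cs \<subseteq> V"
    and "length rs = length cs" and "length rs \<ge> 1"
    and "f = det (Lsub E rs cs)"
    and "f \<noteq> 0" and "lead_coeff_dl f > 0"
  shows "\<exists>M D. two_matching_loops V E M \<and> orientation M D \<and> f = dM E M D"
proof -
  have "det (entry_mat (Lentry E) rs cs) \<noteq> 0"
    using assms(8,9) by (simp add: Lsub_eq_entry_mat)
  then obtain \<tau> where \<tau>: "bij_betw \<tau> (set rs) (set cs)" "\<forall>v\<in>set rs. Lentry E v (\<tau> v) \<noteq> 0"
    by (rule det_entry_mat_nonzero_imp_bij[OF assms(2,3) assms(6)[symmetric]])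
  have adj: "\<forall>v\<in>set rs. \<tau> v = v \<or> {v, \<tau> v} \<in> E"
    using \<tau>(2) Lentry_nonzero_imp_eq_or_edge by metis
  obtain \<sigma> where \<sigma>: "bij_betw \<sigma> (set rs) (set cs)" "\<forall>v\<in>set rs. \<sigma> v = v \<or> {v, \<sigma> v} \<in> E"
    and no_2_cycles: "\<forall>v\<in>set rs. \<sigma> v \<in> set rs \<longrightarrow> \<sigma> (\<sigma> v) = v \<longrightarrow> \<sigma> v = v"
    by (rule bij_betw_break_2_cycles[where P = "\<lambda>v w. {v, w} \<in> E", OF \<tau>(1) adj])
  have inj: "inj_on \<sigma> (set rs)"
    using \<sigma>(1) by (rule bij_betw_imp_inj_on)
  let ?M = "matching_of \<sigma> (set rs)" and ?D = "arcs_of \<sigma> (set rs)"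
  have "tails ?M ?D = set cs"
    using bij_betw_imp_surj_on[OF \<sigma>(1)] by (simp add: tails_matching_of)
  then have "f = dM E ?M ?D"
    using assms(2,3,6,8,10) by (auto intro!: dM_eq_det[symmetric] heads_matching_of)
  with two_matching_loops_matching_of[OF inj assms(4) \<sigma>(2)] orientation_arcs_of[OF inj no_2_cycles]
  show ?thesis
    by blast
qed

end
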